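(* Let $r:\mathfrak h^*\to\wedge^2\mathfrak g$ be a triangular dynamical $r$-matrix and $\mathfrak g_\lambda=\mathfrak h+r(\lambda)^\#\mathfrak h^\perp$. Then $\dim\mathfrak g_\lambda-\dim\mathfrak h$ is independent of $\lambda\in\mathfrak h^*$ and is an even number (called $\mathrm{rank}\,r$). Moreover the Poisson manifold $(M,\pi)$, $M=\mathfrak h^*\times G$, $\pi=\sum_i\vec{h_i}\wedge\frac{\partial}{\partial\lambda^i}+\vec{r(\lambda)}$, is a regular Poisson manifold whose rank at every point equals $2\dim\mathfrak h+\mathrm{rank}\,r$.
   Context: Let $\mathfrak g$ be a finite-dimensional real Lie algebra and $\mathfrak h\subset\mathfrak g$ an abelian Lie subalgebra of dimension $l$ with basis $h_1,\dots,h_l$; $(\lambda^1,\dots,\lambda^l)$ are the induced linear coordinates on $\mathfrak h^*$. A triangular dynamical $r$-matrix is a smooth map $r:\mathfrak h^*\to\wedge^2\mathfrak g$ with $[h,r(\lambda)]=0$ for all $h\in\mathfrak h$ and $\sum_i h_i\wedge\frac{\partial r}{\partial\lambda^i}+\frac12[r,r]=0$ (Schouten-type bracket on $\wedge^\bullet\mathfrak g$). For $\rho\in\wedge^2\mathfrak g$, $\rho^\#:\mathfrak g^*\to\mathfrak g$ is $\langle\rho^\#\xi,\eta\rangle=\rho(\xi,\eta)$, and $\mathfrak h^\perp\subset\mathfrak g^*$ is the annihilator of $\mathfrak h$. $G$ is a connected Lie group with Lie algebra $\mathfrak g$, $M=\mathfrak h^*\times G$, and $\vec u$ denotes the left-invariant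 vector/multivector field on $M$ along the $G$-factor generated by $u\in\wedge^\bullet\mathfrak g$ (for $r(\lambda)$, pointwise in $\lambda$). The bivector $\pi$ is Poisson when $r$ is a triangular dynamical $r$-matrix. *)

theory Defs
  imports "HOL-Analysis.Analysis"
begin

text \<open>Finite-dimensional real Lie algebra: the underlying space is real^'n,
  the dual space is identified with real^'n via the dot product.\<close>

definition lie_algebra :: "(real^'n \<Rightarrow> real^'n \<Rightarrow> real^'n) \<Rightarrow> bool" where
  "lie_algebra br \<longleftrightarrow> bilinear br \<and> (\<forall>x y. br x y = - br y x)
     \<and> (\<forall>x y z. br x (br y z) + br y (br z x) + br z (br x y) = 0)"

fun C_k :: "nat \<Rightarrow> ('a::real_normed_vector \<Rightarrow> 'b::real_normed_vector) \<Rightarrow> bool" where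
  "C_k 0 f = continuous_on UNIV f"
| "C_k (Suc k) f = (continuous_on UNIV f \<and> (\<forall>x. f differentiable (at x))
      \<and> (\<forall>v. C_k k (\<lambda>x. frechet_derivative f (at x) v)))"

definition smooth_map :: "('a::real_normed_vector \<Rightarrow> 'b::real_normed_vector) \<Rightarrow> bool" where
  "smooth_map f \<longleftrightarrow> (\<forall>k. C_k k f)"

text \<open>Elements of wedge^2 g are represented by antisymmetric matrices R, viewed
  as the skew bilinear form rho(xi,eta) = xi . (R *v eta) on g*.
  Convention: (x wedge y)(xi,eta) = xi(x) eta(y) - xi(y) eta(x).\<close>

definition wedge2 :: "real^'n^'n \<Rightarrow> bool" where
  "wedge2 R \<longleftrightarrow> transpose R = - R"

definition biv :: "real^'n^'n \<Rightarrow> real^'n \<Rightarrow> real^'n \<Rightarrow> real" where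
  "biv R \<xi> \<eta> = \<xi> \<bullet> (R *v \<eta>)"

text \<open>rho^#: <rho^# xi, eta> = rho(xi, eta).\<close>
definition sharp :: "real^'n^'n \<Rightarrow> real^'n \<Rightarrow> real^'n" where
  "sharp R \<xi> = transpose R *v \<xi>"

text \<open>Transpose of ad_x acting on g*: <adT x xi, y> = <xi, [x,y]>.\<close>
definition adT :: "(real^'n \<Rightarrow> real^'n \<Rightarrow> real^'n) \<Rightarrow> real^'n \<Rightarrow> real^'n \<Rightarrow> real^'n" where
  "adT br x \<xi> = (\<chi> j. \<xi> \<bullet> br x (axis j 1))"

text \<open>[x, rho] = 0 in wedge^2 g (ad_x extended as a derivation).\<close>
definition ad_commutes :: "(real^'n \<Rightarrow> real^'n \<Rightarrow> real^'n) \<Rightarrow> real^'n \<Rightarrow> real^'n^'n \<Rightarrow> bool" where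
  "ad_commutes br x R \<longleftrightarrow>
     (\<forall>\<xi> \<eta>. biv R (adT br x \<xi>) \<eta> + biv R \<xi> (adT br x \<eta>) = 0)"

text \<open>Trivectors are evaluated as alternating trilinear forms on g* with the
  convention (x wedge y wedge z)(xi,eta,zeta) = det. Then
  (x wedge D)(xi,eta,zeta) = xi(x) D(eta,zeta) - eta(x) D(xi,zeta) + zeta(x) D(xi,eta),
  and (1/2)[rho,rho](xi,eta,zeta) = cyclic sum of <xi, [rho^# eta, rho^# zeta]>
  (Schouten bracket extending the Lie bracket).\<close>

definition wedge_vec_biv :: "real^'n \<Rightarrow> real^'n^'n \<Rightarrow> real^'n \<Rightarrow> real^'n \<Rightarrow> real^'n \<Rightarrow> real" where
  "wedge_vec_biv x D \<xi> \<eta> \<zeta> =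
     (\<xi> \<bullet> x) * biv D \<eta> \<zeta> - (\<eta> \<bullet> x) * biv D \<xi> \<zeta> + (\<zeta> \<bullet> x) * biv D \<xi> \<eta>"

definition half_schouten :: "(real^'n \<Rightarrow> real^'n \<Rightarrow> real^'n) \<Rightarrow> real^'n^'n
    \<Rightarrow> real^'n \<Rightarrow> real^'n \<Rightarrow> real^'n \<Rightarrow> real" where
  "half_schouten br R \<xi> \<eta> \<zeta> =
     \<xi> \<bullet> br (sharp R \<eta>) (sharp R \<zeta>) + \<eta> \<bullet> br (sharp R \<zeta>) (sharp R \<xi>)
     + \<zeta> \<bullet> br (sharp R \<xi>) (sharp R \<eta>)"

text \<open>Triangular dynamical r-matrix over the abelian subalgebra with basis h,
  with linear coordinates lambda on h* (lambda :: real^'l).\<close>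

definition triangular_dynamical_r_matrix ::
  "(real^'n \<Rightarrow> real^'n \<Rightarrow> real^'n) \<Rightarrow> ('l::finite \<Rightarrow> real^'n) \<Rightarrow> (real^'l \<Rightarrow> real^'n^'n) \<Rightarrow> bool" where
  "triangular_dynamical_r_matrix br h r \<longleftrightarrow>
     smooth_map r \<and> (\<forall>lam. wedge2 (r lam))
     \<and> (\<forall>lam i. ad_commutes br (h i) (r lam))
     \<and> (\<forall>lam \<xi> \<eta> \<zeta>.
          (\<Sum>i\<in>UNIV. wedge_vec_biv (h i) (frechet_derivative r (at lam) (axis i 1)) \<xi> \<eta> \<zeta>)
          + half_schouten br (r lam) \<xi> \<eta> \<zeta> = 0)"

definition annih :: "('l \<Rightarrow> real^'n) \<Rightarrow> (real^'n) set" where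
  "annih h = {\<xi>. \<forall>i. \<xi> \<bullet> h i = 0}"

definition g_lam :: "('l \<Rightarrow> real^'n) \<Rightarrow> (real^'l \<Rightarrow> real^'n^'n) \<Rightarrow> real^'l \<Rightarrow> (real^'n) set" where
  "g_lam h r lam = {x + y | x y. x \<in> span (range h) \<and> y \<in> sharp (r lam) ` annih h}"

text \<open>The Poisson bivector pi = sum_i h_i^L wedge d/dlambda^i + r(lambda)^L at a point
  (lambda, g) of M = h* x G, read in the left trivialisation
  T_(lambda,g) M = h* x g (i.e. R^l x R^n); its cotangent space is R^l x g*.
  pi((alpha,xi),(beta,eta)) = sum_i (xi(h_i) beta_i - eta(h_i) alpha_i) + r(lambda)(xi,eta).
  pi_sharp is the induced map T* M -> T M, and the rank of pi at the point
  is the dimension of its image.\<close>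

definition pi_sharp :: "('l::finite \<Rightarrow> real^'n) \<Rightarrow> (real^'l \<Rightarrow> real^'n^'n) \<Rightarrow> real^'l
    \<Rightarrow> ((real^'l) \<times> (real^'n)) \<Rightarrow> ((real^'l) \<times> (real^'n))" where
  "pi_sharp h r lam p =
     ((\<chi> i. snd p \<bullet> h i), sharp (r lam) (snd p) - (\<Sum>i\<in>UNIV. (fst p $ i) *\<^sub>R h i))"

definition poisson_rank :: "('l::finite \<Rightarrow> real^'n) \<Rightarrow> (real^'l \<Rightarrow> real^'n^'n) \<Rightarrow> real^'l \<Rightarrow> nat" where
  "poisson_rank h r lam = dim (range (pi_sharp h r lam))"

end

theory Submission
  imports Defs
begin

text \<open>
  Write \<open>\<pi>\<^sub>\<lambda>\<close> for the bivector at a point with \<open>\<lambda>\<close>-coordinate \<open>\<lambda>\<close>, read in the left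
  trivialisation. Differentiating \<open>\<pi>\<^sub>\<lambda>\<close> in a direction \<open>d\<close> of \<open>\<hh>\<^sup>*\<close> produces
  \<open>\<Sum> d\<^sub>i \<partial>r/\<partial>\<lambda>\<^sup>i\<close>, and the dynamical CYBE says exactly that this is the Lie derivative of
  \<open>\<pi>\<^sub>\<lambda>\<close> along an explicit linear vector field on the cotangent fibre. Integrating that field
  along the segment from \<open>a\<close> to \<open>a + d\<close> gives linear maps \<open>T\<close> with
  \<open>\<pi>\<^sub>a(x, y) = \<pi>\<^sub>a\<^sub>+\<^sub>d(T x, T y)\<close>, so \<open>rank \<pi>\<^sub>a \<le> rank \<pi>\<^sub>a\<^sub>+\<^sub>d\<close>. Short steps work in
  both directions, so the rank is locally constant, hence constant on the connected space
  \<open>\<hh>\<^sup>*\<close>. Finally \<open>rank \<pi>\<^sub>\<lambda> = dim \<hh> + dim \<gg>\<^sub>\<lambda>\<close>, because the image of \<open>\<pi>\<^sup>\<sharp>\<close> is the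
  image of \<open>\<hh>\<^sup>* \<times> \<gg>\<^sub>\<lambda>\<close> under an injective linear map, and \<open>rank \<pi>\<^sub>\<lambda>\<close> is even because \<open>\<pi>\<^sub>\<lambda>\<close> is skew; so
  \<open>dim \<gg>\<^sub>\<lambda> - dim \<hh> = rank \<pi>\<^sub>\<lambda> - 2 dim \<hh>\<close> is constant and even.
\<close>

section \<open>Linear algebra\<close>

locale skew_form =
  fixes b :: "'a::euclidean_space \<Rightarrow> 'a \<Rightarrow> real"
  assumes bilinear: "bilinear b"
    and skew: "b x y = - b y x"
begin

lemma linear_left: "linear (\<lambda>x. b x y)" and linear_right: "linear (b x)"
  using bilinear unfolding bilinear_def by auto

lemmas left_add = linear_add[OF linear_left] and left_diff = linear_diff[OF linear_left]
  and left_scale = linear_scale[OF linear_left] and left_zero = linear_0[OF linear_left]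
  and right_add = linear_add[OF linear_right] and right_diff = linear_diff[OF linear_right]
  and right_scale = linear_scale[OF linear_right] and right_zero = linear_0[OF linear_right]

lemma self_eq_0 [simp]: "b x x = 0"
  using skew[of x x] by simp

definition radical :: "'a set \<Rightarrow> 'a set" where
  "radical S = {x \<in> S. \<forall>y \<in> S. b x y = 0}"

text \<open>
  If \<open>b u v = 1\<close>, then \<open>S\<close> is the sum of the hyperbolic plane \<open>span {u, v}\<close> and its
  \<open>b\<close>-orthogonal complement \<open>orth_pair S u v\<close>, which has the same radical; splitting off such
  planes proves \<open>even_dim_diff_radical\<close>.
\<close>

definition orth_pair :: "'a set \<Rightarrow> 'a \<Rightarrow> 'a \<Rightarrow> 'a set" where
  "orth_pair S u v = {x \<in> S. b x u = 0 \<and> b x v = 0}"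

definition pair_proj :: "'a \<Rightarrow> 'a \<Rightarrow> 'a \<Rightarrow> 'a" where
  "pair_proj u v x = x - b x v *\<^sub>R u + b x u *\<^sub>R v"

lemma subspace_orth_pair: "subspace S \<Longrightarrow> subspace (orth_pair S u v)"
  unfolding subspace_def orth_pair_def by (auto simp: left_add left_scale left_zero)

lemma pair_proj_in_orth_pair:
  assumes "subspace S" "u \<in> S" "v \<in> S" "b u v = 1" "x \<in> S"
  shows "pair_proj u v x \<in> orth_pair S u v"
  using assms skew[of v u]
  by (simp add: orth_pair_def pair_proj_def subspace_add subspace_diff subspace_scale
      left_add left_diff left_scale)

lemma dim_span_pair:
  assumes "b u v = 1"
  shows "dim (span {u, v}) = 2"
proof -
  have "u \<notin> span {v}" "v \<noteq> 0"
    using assms by (auto simp: span_singleton left_scale right_zero)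
  moreover from this have "u \<noteq> v" by (auto intro: span_base)
  ultimately have "independent {u, v}" "u \<noteq> v"
    by (auto simp: independent_insert)
  then show ?thesis by (simp add: dim_eq_card_independent)
qed

lemma orth_pair_Int_span_pair:
  assumes uv: "b u v = 1"
  shows "orth_pair S u v \<inter> span {u, v} \<subseteq> {0}"
proof
  fix x assume x: "x \<in> orth_pair S u v \<inter> span {u, v}"
  then obtain a where "x - a *\<^sub>R u \<in> span {v}"
    by (auto simp: span_insert)
  then obtain c where "x - a *\<^sub>R u = c *\<^sub>R v"
    by (auto simp: span_singleton)
  then have "x = a *\<^sub>R u + c *\<^sub>R v"
    by (simp add: algebra_simps)
  moreover have "b x u = 0" "b x v = 0" using x by (auto simp: orth_pair_def)
  moreover have "b v u = -1" using skew[of v u] uv by simp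
  ultimately show "x \<in> {0}" using uv by (simp add: left_add left_scale)
qed

lemma orth_pair_plus_span_pair:
  assumes S: "subspace S" and u: "u \<in> S" and v: "v \<in> S" and uv: "b u v = 1"
  shows "{x + y |x y. x \<in> orth_pair S u v \<and> y \<in> span {u, v}} = S"
proof (intro subset_antisym subsetI)
  fix z assume "z \<in> {x + y |x y. x \<in> orth_pair S u v \<and> y \<in> span {u, v}}"
  moreover have "span {u, v} \<subseteq> S" using S u v by (simp add: span_minimal)
  ultimately show "z \<in> S" using S by (auto simp: orth_pair_def intro: subspace_add)
next
  fix x assume "x \<in> S"
  moreover have "x = pair_proj u v x + (b x v *\<^sub>R u - b x u *\<^sub>R v)"
    by (simp add: pair_proj_def)
  moreover have "b x v *\<^sub>R u - b x u *\<^sub>R v \<in> span {u, v}"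
    by (intro span_diff span_scale span_base) auto
  ultimately show "x \<in> {x + y |x y. x \<in> orth_pair S u v \<and> y \<in> span {u, v}}"
    using pair_proj_in_orth_pair[OF S u v uv] by blast
qed

lemma dim_orth_pair:
  assumes S: "subspace S" and u: "u \<in> S" and v: "v \<in> S" and uv: "b u v = 1"
  shows "dim S = dim (orth_pair S u v) + 2"
proof -
  have dim_Int: "dim (orth_pair S u v \<inter> span {u, v}) = 0"
    using orth_pair_Int_span_pair[OF uv] by (simp add: dim_eq_0)
  show ?thesis
    using dim_sums_Int[OF subspace_orth_pair[OF S] subspace_span, of u v "{u, v}"]
    unfolding orth_pair_plus_span_pair[OF assms] dim_span_pair[OF uv] dim_Int by simp
qed

lemma radical_orth_pair:
  assumes S: "subspace S" and u: "u \<in> S" and v: "v \<in> S" and uv: "b u v = 1"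
  shows "radical (orth_pair S u v) = radical S"
proof (intro subset_antisym subsetI)
  fix x assume x: "x \<in> radical (orth_pair S u v)"
  have "b x y = 0" if "y \<in> S" for y
  proof -
    have "b x y = b x (pair_proj u v y + (b y v *\<^sub>R u - b y u *\<^sub>R v))"
      by (simp add: pair_proj_def)
    also have "\<dots> = b x (pair_proj u v y) + b y v * b x u - b y u * b x v"
      by (simp add: right_add right_diff right_scale)
    finally have "b x y = b x (pair_proj u v y) + b y v * b x u - b y u * b x v" .
    then show ?thesis
      using x pair_proj_in_orth_pair[OF S u v uv that] by (simp add: radical_def orth_pair_def)
  qed
  then show "x \<in> radical S" using x by (simp add: radical_def orth_pair_def)
next
  fix x assume "x \<in> radical S"
  then show "x \<in> radical (orth_pair S u v)"
    using u v by (auto simp: radical_def orth_pair_def)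
qed

theorem even_dim_diff_radical: "subspace S \<Longrightarrow> even (dim S - dim (radical S))"
proof (induction "dim S" arbitrary: S rule: less_induct)
  case less
  show ?case
  proof (cases "radical S = S")
    case False
    then obtain u v0 where u: "u \<in> S" and v0: "v0 \<in> S" and nz: "b u v0 \<noteq> 0"
      by (auto simp: radical_def)
    define v where "v = (1 / b u v0) *\<^sub>R v0"
    have v: "v \<in> S" using v0 less.prems by (simp add: v_def subspace_scale)
    have uv: "b u v = 1" using nz by (simp add: v_def right_scale)
    note dim_S = dim_orth_pair[OF less.prems u v uv]
    have "even (dim (orth_pair S u v) - dim (radical S))"
      using less.hyps[of "orth_pair S u v"] dim_S subspace_orth_pair[OF less.prems]
        radical_orth_pair[OF less.prems u v uv] by simp
    moreover have "radical S \<subseteq> orth_pair S u v"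
      unfolding radical_orth_pair[OF less.prems u v uv, symmetric] by (auto simp: radical_def)
    then have "dim (radical S) \<le> dim (orth_pair S u v)"
      by (rule dim_subset)
    ultimately show ?thesis using dim_S by simp
  qed simp
qed

end

lemma even_dim_range_skew:
  fixes P :: "'a::euclidean_space \<Rightarrow> 'a"
  assumes lin: "linear P" and skew: "\<And>x y. x \<bullet> P y = - (y \<bullet> P x)"
  shows "even (dim (range P))"
proof -
  interpret skew_form "\<lambda>x y. x \<bullet> P y"
  proof
    show "bilinear (\<lambda>x y. x \<bullet> P y)"
      using linear_add[OF lin] linear_scale[OF lin]
      by (simp add: bilinear_def linear_iff inner_add_right inner_add_left)
  qed (rule skew)
  have "radical UNIV = {y. \<forall>x \<in> range P. orthogonal x y}"
    by (auto simp: radical_def orthogonal_def inner_commute)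
  then have "dim (radical UNIV) + dim (range P) = dim (UNIV :: 'a set)"
    using dim_subspace_orthogonal_to_vectors[of "range P" UNIV] lin
    by (simp add: linear_subspace_image)
  then have "dim (range P) = dim (UNIV :: 'a set) - dim (radical UNIV)"
    by linarith
  then show ?thesis
    using even_dim_diff_radical[OF subspace_UNIV] by simp
qed

lemma dim_range_le_of_pullback:
  fixes P :: "'a::euclidean_space \<Rightarrow> 'a" and Q :: "'b::euclidean_space \<Rightarrow> 'b"
  assumes pullback: "\<And>x y. x \<bullet> P y = T x \<bullet> Q (T y)"
  shows "dim (range P) \<le> dim (range Q)"
proof -
  define L where "L z = (\<Sum>b\<in>Basis. (T b \<bullet> z) *\<^sub>R b)" for z
  have "linear L"
    unfolding L_def
    by (simp add: linear_iff inner_add_right scaleR_add_left sum.distrib scaleR_sum_right)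
  have "P y = L (Q (T y))" for y
  proof -
    have "P y = (\<Sum>b\<in>Basis. (P y \<bullet> b) *\<^sub>R b)"
      by (rule euclidean_representation[symmetric])
    then show ?thesis
      by (simp only: L_def inner_commute[of "P y"] pullback)
  qed
  then have "range P \<subseteq> L ` range Q" by auto
  then have "dim (range P) \<le> dim (L ` range Q)" by (rule dim_subset)
  also have "\<dots> \<le> dim (range Q)" using \<open>linear L\<close> by (rule dim_image_le)
  finally show ?thesis .
qed

lemma bilinear_norm_le_sum_Basis:
  fixes \<phi> :: "'a::euclidean_space \<Rightarrow> 'b::euclidean_space \<Rightarrow> 'c::real_normed_vector"
  assumes "bilinear \<phi>"
  shows "norm (\<phi> a b) \<le> norm a * norm b * (\<Sum>(i, j)\<in>Basis \<times> Basis. norm (\<phi> i j))"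
proof -
  have "\<phi> a b = \<phi> (\<Sum>i\<in>Basis. (a \<bullet> i) *\<^sub>R i) (\<Sum>j\<in>Basis. (b \<bullet> j) *\<^sub>R j)"
    by (simp add: euclidean_representation)
  also have "\<dots> = (\<Sum>(i, j)\<in>Basis \<times> Basis. (a \<bullet> i) *\<^sub>R (b \<bullet> j) *\<^sub>R \<phi> i j)"
    using assms by (simp add: bilinear_sum bilinear_lmul bilinear_rmul case_prod_beta)
  finally have expand: "\<phi> a b = (\<Sum>(i, j)\<in>Basis \<times> Basis. (a \<bullet> i) *\<^sub>R (b \<bullet> j) *\<^sub>R \<phi> i j)" .
  have "norm (\<phi> a b) \<le> (\<Sum>(i, j)\<in>Basis \<times> Basis. norm ((a \<bullet> i) *\<^sub>R (b \<bullet> j) *\<^sub>R \<phi> i j))"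
    unfolding expand case_prod_beta by (rule norm_sum)
  also have "\<dots> \<le> (\<Sum>(i, j)\<in>Basis \<times> Basis. norm a * norm b * norm (\<phi> i j))"
  proof (rule sum_mono, clarify)
    fix i :: 'a and j :: 'b assume "i \<in> Basis" "j \<in> Basis"
    then have "\<bar>a \<bullet> i\<bar> * \<bar>b \<bullet> j\<bar> \<le> norm a * norm b"
      by (intro mult_mono Basis_le_norm) auto
    then show "norm ((a \<bullet> i) *\<^sub>R (b \<bullet> j) *\<^sub>R \<phi> i j) \<le> norm a * norm b * norm (\<phi> i j)"
      by (simp add: abs_mult mult_right_mono)
  qed
  finally show ?thesis
    by (simp add: sum_distrib_left case_prod_beta)
qed

lemma bilinear_family_uniform_bound:
  fixes \<phi> :: "'p::topological_space \<Rightarrow> 'a::euclidean_space \<Rightarrow> 'b::euclidean_space \<Rightarrow> 'c::real_normed_vector"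
  assumes "compact C" and bil: "\<And>p. p \<in> C \<Longrightarrow> bilinear (\<phi> p)"
    and cont: "\<And>a b. continuous_on C (\<lambda>p. \<phi> p a b)"
  shows "\<exists>B>0. \<forall>p\<in>C. \<forall>a b. norm (\<phi> p a b) \<le> B * norm a * norm b"
proof -
  define g where "g p = (\<Sum>(i, j)\<in>Basis \<times> Basis. norm (\<phi> p i j))" for p
  have "continuous_on C g"
    unfolding g_def case_prod_beta by (intro continuous_intros cont)
  then have "bounded (g ` C)"
    by (intro compact_imp_bounded compact_continuous_image \<open>compact C\<close>)
  then obtain B0 where "\<forall>x \<in> g ` C. norm x \<le> B0"
    by (auto simp: bounded_iff)
  then have g_le: "g p \<le> max B0 1" if "p \<in> C" for p
    using that by (fastforce dest: abs_le_D1)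
  have "norm (\<phi> p a b) \<le> max B0 1 * norm a * norm b" if "p \<in> C" for p a b
  proof -
    have "norm (\<phi> p a b) \<le> norm a * norm b * g p"
      unfolding g_def by (rule bilinear_norm_le_sum_Basis[OF bil[OF that]])
    also have "\<dots> \<le> norm a * norm b * max B0 1"
      using g_le[OF that] by (intro mult_left_mono) auto
    finally show ?thesis by (simp add: mult_ac)
  qed
  then show ?thesis by (intro exI[of _ "max B0 1"]) auto
qed

section \<open>ODEs with a small Lipschitz constant\<close>

lemma clamped_in_bcontfun:
  fixes g :: "real \<Rightarrow> 'a::real_normed_vector"
  assumes "continuous_on {0..1} g"
  shows "(\<lambda>t. g (max 0 (min 1 t))) \<in> bcontfun"
proof -
  let ?c = "\<lambda>t::real. max 0 (min 1 t)"
  have "continuous_on UNIV (g \<circ> ?c)"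
    by (intro continuous_on_compose continuous_intros continuous_on_subset[OF assms]) auto
  moreover have "range (g \<circ> ?c) \<subseteq> g ` {0..1}" by auto
  then have "bounded (range (g \<circ> ?c))"
    by (meson assms bounded_subset compact_Icc compact_continuous_image compact_imp_bounded)
  ultimately show ?thesis by (simp add: bcontfun_def o_def)
qed

lemma norm_integral_diff_le:
  fixes f :: "real \<Rightarrow> 'a::banach \<Rightarrow> 'a"
  assumes c: "c \<in> {0..1}"
    and cont: "continuous_on {0..1} (\<lambda>t. f t (u t))" "continuous_on {0..1} (\<lambda>t. f t (w t))"
    and lipschitz: "\<And>t x y. t \<in> {0..1} \<Longrightarrow> norm (f t x - f t y) \<le> K * norm (x - y)"
    and close: "\<And>t. t \<in> {0..1} \<Longrightarrow> norm (u t - w t) \<le> B" and K: "0 \<le> K"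
  shows "norm (integral {0..c} (\<lambda>t. f t (u t)) - integral {0..c} (\<lambda>t. f t (w t))) \<le> K * B"
proof -
  have sub: "{0..c} \<subseteq> {0..1}" using c by auto
  note cont_c = continuous_on_subset[OF cont(1) sub] continuous_on_subset[OF cont(2) sub]
  have "integral {0..c} (\<lambda>t. f t (u t)) - integral {0..c} (\<lambda>t. f t (w t))
      = integral {0..c} (\<lambda>t. f t (u t) - f t (w t))"
    using cont_c by (intro integral_diff[symmetric] integrable_continuous_interval)
  also have "norm \<dots> \<le> (K * B) * (c - 0)"
  proof (rule integral_bound)
    show "continuous_on {0..c} (\<lambda>t. f t (u t) - f t (w t))"
      using cont_c by (rule continuous_on_diff)
    fix t assume "t \<in> {0..c}"
    then have t: "t \<in> {0..1}" using sub by auto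
    have "norm (f t (u t) - f t (w t)) \<le> K * norm (u t - w t)" by (rule lipschitz[OF t])
    also have "\<dots> \<le> K * B" by (rule mult_left_mono[OF close[OF t] K])
    finally show "norm (f t (u t) - f t (w t)) \<le> K * B" .
  qed (use c in simp)
  also have "\<dots> \<le> K * B"
  proof -
    have "0 \<le> B" using order.trans[OF norm_ge_zero close[of 0]] by simp
    then show ?thesis using c K by (simp add: mult_left_le)
  qed
  finally show ?thesis .
qed

lemma continuous_on_along_graph:
  assumes "continuous_on (S \<times> UNIV) (\<lambda>(t, x). f t x)" and "continuous_on S g"
  shows "continuous_on S (\<lambda>t. f t (g t))"
proof -
  have "continuous_on S (\<lambda>t. (t, g t))" using assms(2) by (intro continuous_intros)
  moreover have "(\<lambda>t. (t, g t)) ` S \<subseteq> S \<times> UNIV" by auto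
  ultimately show ?thesis using continuous_on_compose2[OF assms(1)] by fastforce
qed

text \<open>
  The solution is the fixed point of the Picard operator on bounded continuous functions on the
  real line, continued constantly outside \<open>[0, 1]\<close>; \<open>K < 1\<close> makes the operator a contraction.
\<close>

lemma integral_equation_solution_exists:
  fixes f :: "real \<Rightarrow> 'a::banach \<Rightarrow> 'a"
  assumes cont: "continuous_on ({0..1} \<times> UNIV) (\<lambda>(t, x). f t x)"
    and lipschitz: "\<And>t x y. t \<in> {0..1} \<Longrightarrow> norm (f t x - f t y) \<le> K * norm (x - y)"
    and K: "0 \<le> K" "K < 1"
  shows "\<exists>v. continuous_on {0..1} v \<and> (\<forall>s\<in>{0..1}. v s = x0 + integral {0..s} (\<lambda>t. f t (v t)))"
proof -
  note f_cont = continuous_on_along_graph[OF cont]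
  define I where "I u s = x0 + integral {0..s} (\<lambda>t. f t (apply_bcontfun u t))" for u s
  define F where "F u = Bcontfun (\<lambda>s. I u (max 0 (min 1 s)))" for u
  have "continuous_on {0..1} (I u)" for u
    unfolding I_def
    by (intro continuous_intros indefinite_integral_continuous_1 integrable_continuous_interval f_cont)
      simp
  then have F_apply: "apply_bcontfun (F u) s = I u (max 0 (min 1 s))" for u s
    unfolding F_def using clamped_in_bcontfun[of "I u"] by (simp add: Bcontfun_inverse)
  have "dist (F u) (F w) \<le> K * dist u w" for u w
  proof (rule dist_bound)
    fix s :: real
    have "max 0 (min 1 s) \<in> {0..1}" by simp
    from norm_integral_diff_le[OF this f_cont f_cont lipschitz _ K(1)]
    have "norm (I u (max 0 (min 1 s)) - I w (max 0 (min 1 s))) \<le> K * dist u w"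
      unfolding I_def by (simp add: dist_bounded flip: dist_norm)
    then show "dist (F u s) (F w s) \<le> K * dist u w"
      by (simp add: F_apply dist_norm)
  qed
  then obtain u where "F u = u"
    using banach_fix_type[OF K, of F] by blast
  then have "apply_bcontfun u s = I u s" if "s \<in> {0..1}" for s
    using that F_apply[of u s] by simp
  then show ?thesis
    by (intro exI[of _ "apply_bcontfun u"]) (simp add: I_def)
qed

lemma ode_solution_exists:
  fixes f :: "real \<Rightarrow> 'a::banach \<Rightarrow> 'a"
  assumes cont: "continuous_on ({0..1} \<times> UNIV) (\<lambda>(t, x). f t x)"
    and lipschitz: "\<And>t x y. t \<in> {0..1} \<Longrightarrow> norm (f t x - f t y) \<le> K * norm (x - y)"
    and K: "0 \<le> K" "K < 1"
  shows "\<exists>v. v 0 = x0 \<and> (\<forall>t\<in>{0..1}. (v has_vector_derivative f t (v t)) (at t within {0..1}))"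
proof -
  obtain v where v_cont: "continuous_on {0..1} v"
    and v_eq: "\<And>s. s \<in> {0..1} \<Longrightarrow> v s = x0 + integral {0..s} (\<lambda>t. f t (v t))"
    using integral_equation_solution_exists[OF cont lipschitz K] by blast
  have "(v has_vector_derivative f s (v s)) (at s within {0..1})" if s: "s \<in> {0..1}" for s
  proof (rule has_vector_derivative_transform[OF s v_eq])
    from integral_has_vector_derivative[OF continuous_on_along_graph[OF cont v_cont] s]
    show "((\<lambda>s. x0 + integral {0..s} (\<lambda>t. f t (v t))) has_vector_derivative f s (v s))
        (at s within {0..1})"
      by (intro derivative_eq_intros) auto
  qed
  moreover have "v 0 = x0" using v_eq[of 0] by simp
  ultimately show ?thesis by blast
qed

section \<open>The Poisson bivector and its rank\<close>

lemma biv_eq_inner_sharp: "biv R \<xi> \<eta> = sharp R \<xi> \<bullet> \<eta>"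
  unfolding biv_def sharp_def by (metis dot_lmul_matrix inner_commute transpose_matrix_vector)

lemma biv_antisym:
  assumes "wedge2 R"
  shows "biv R \<xi> \<eta> = - biv R \<eta> \<xi>"
proof -
  have "\<xi> \<bullet> (R *v \<eta>) = (transpose R *v \<xi>) \<bullet> \<eta>"
    by (metis dot_lmul_matrix transpose_matrix_vector)
  also have "transpose R *v \<xi> = - (R *v \<xi>)"
    using assms by (simp add: wedge2_def vec_eq_iff matrix_vector_mult_def sum_negf)
  finally show ?thesis unfolding biv_def by (simp add: inner_commute)
qed

lemma bilinear_sharp: "bilinear sharp"
  unfolding bilinear_def linear_iff sharp_def
  by (simp add: transpose_def matrix_vector_mult_def vec_eq_iff sum.distrib algebra_simps
      sum_distrib_left)

lemma linear_sharp: "linear (sharp R)"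
  using bilinear_sharp by (auto simp: bilinear_def)

lemma inner_sharp_sum:
  "\<xi> \<bullet> sharp (\<Sum>i\<in>I. c i *\<^sub>R D i) \<eta> = (\<Sum>i\<in>I. c i * biv (D i) \<eta> \<xi>)"
proof -
  have "linear (\<lambda>R. sharp R \<eta>)"
    using bilinear_sharp by (auto simp: bilinear_def)
  then show ?thesis
    by (simp add: linear_sum[OF \<open>linear _\<close>, simplified] linear_scale[OF \<open>linear _\<close>, simplified]
        biv_eq_inner_sharp inner_sum_right inner_commute)
qed

lemma inner_vec_lambda: "x \<bullet> (\<chi> i. f i) = (\<Sum>i\<in>UNIV. x $ i * f i)"
  by (simp add: inner_vec_def)

lemma inner_adT:
  assumes "bilinear br"
  shows "adT br x \<xi> \<bullet> y = \<xi> \<bullet> br x y"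
proof -
  have "adT br x \<xi> \<bullet> y = (\<Sum>j\<in>UNIV. (\<xi> \<bullet> br x (axis j 1)) * y $ j)"
    by (simp add: adT_def inner_vec_def)
  also have "\<dots> = \<xi> \<bullet> (\<Sum>j\<in>UNIV. y $ j *\<^sub>R br x (axis j 1))"
    by (simp add: inner_sum_right mult.commute)
  also have "(\<Sum>j\<in>UNIV. y $ j *\<^sub>R br x (axis j 1)) = br x (\<Sum>j\<in>UNIV. y $ j *\<^sub>R axis j 1)"
    using assms by (simp add: bilinear_def linear_sum linear_scale)
  also have "(\<Sum>j\<in>UNIV. y $ j *\<^sub>R axis j (1::real)) = y"
    using basis_expansion[of y] by (simp add: scalar_mult_eq_scaleR)
  finally show ?thesis .
qed

lemma bilinear_adT:
  assumes "bilinear br"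
  shows "bilinear (adT br)"
  unfolding bilinear_def linear_iff adT_def
  by (simp add: vec_eq_iff inner_add_left inner_add_right
      bilinear_ladd[OF assms] bilinear_lmul[OF assms])

definition poisson_map ::
    "('l::finite \<Rightarrow> real^'n) \<Rightarrow> real^'n^'n \<Rightarrow> (real^'l) \<times> (real^'n) \<Rightarrow> (real^'l) \<times> (real^'n)" where
  "poisson_map h R y = ((\<chi> i. snd y \<bullet> h i), sharp R (snd y) - (\<Sum>i\<in>UNIV. fst y $ i *\<^sub>R h i))"

lemma pi_sharp_eq_poisson_map: "pi_sharp h r lam = poisson_map h (r lam)"
  by (simp add: fun_eq_iff pi_sharp_def poisson_map_def)

lemma inner_poisson_map:
  "(\<alpha>, \<xi>) \<bullet> poisson_map h R (\<beta>, \<eta>)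
     = (\<Sum>i\<in>UNIV. \<alpha> $ i * (\<eta> \<bullet> h i)) + \<xi> \<bullet> sharp R \<eta> - (\<Sum>i\<in>UNIV. \<beta> $ i * (\<xi> \<bullet> h i))"
  by (simp add: poisson_map_def inner_vec_lambda inner_diff_right inner_sum_right)

lemma poisson_map_antisym:
  assumes "wedge2 R"
  shows "x \<bullet> poisson_map h R y = - (y \<bullet> poisson_map h R x)"
  using biv_antisym[OF assms, of "snd x" "snd y"]
  by (cases x, cases y) (simp add: inner_poisson_map biv_eq_inner_sharp inner_commute)

lemma linear_poisson_map: "linear (poisson_map h R)"
  by (simp add: linear_add[OF linear_sharp] linear_scale[OF linear_sharp]
      linear_iff poisson_map_def vec_eq_iff inner_add_left scaleR_add_left
      sum.distrib scaleR_sum_right algebra_simps)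

lemma dual_lift_exists:
  fixes h :: "'l::finite \<Rightarrow> real^'n"
  assumes "inj h" and "independent (range h)"
  obtains E :: "real^'l \<Rightarrow> real^'n" where "linear E" and "\<And>a j. E a \<bullet> h j = a $ j"
proof -
  obtain f :: "real^'n \<Rightarrow> real^'l" where f: "linear f" "\<forall>x\<in>range h. f x = axis (inv h x) 1"
    using linear_independent_extend[OF assms(2), of "\<lambda>x. axis (inv h x) 1"] by auto
  have "adjoint f a \<bullet> h j = a $ j" for a j
  proof -
    have "adjoint f a \<bullet> h j = f (h j) \<bullet> a"
      by (simp only: inner_commute[of _ "h j"] adjoint_works[OF f(1)])
    then show ?thesis using f(2) assms(1) by (simp add: inner_axis')
  qed
  with adjoint_linear[OF f(1)] show ?thesis by (rule that)
qed

lemma span_range_eq_sum: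
  fixes h :: "'l::finite \<Rightarrow> 'a::real_vector"
  assumes "inj h" and "x \<in> span (range h)"
  obtains c where "x = (\<Sum>j\<in>UNIV. c j *\<^sub>R h j)"
proof -
  obtain u where "x = (\<Sum>v\<in>range h. u v *\<^sub>R v)"
    using assms(2) span_finite[of "range h"] by auto
  also have "\<dots> = (\<Sum>j\<in>UNIV. u (h j) *\<^sub>R h j)"
    using sum.reindex[OF assms(1), of "\<lambda>v. u v *\<^sub>R v"] by simp
  finally show ?thesis by (rule that)
qed

lemma range_pi_sharp:
  assumes "inj h" and E: "\<And>a j. E a \<bullet> h j = a $ j"
  shows "range (pi_sharp h r lam) = (\<lambda>(a, y). (a, y + sharp (r lam) (E a))) ` (UNIV \<times> g_lam h r lam)"
proof -
  let ?S = "sharp (r lam)"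
  have "pi_sharp h r lam (\<alpha>, \<xi>) \<in> (\<lambda>(a, y). (a, y + ?S (E a))) ` (UNIV \<times> g_lam h r lam)" for \<alpha> \<xi>
  proof -
    define a where "a = (\<chi> j. \<xi> \<bullet> h j)"
    have "\<xi> - E a \<in> annih h" by (simp add: annih_def inner_diff_left E a_def)
    moreover have "- (\<Sum>i\<in>UNIV. \<alpha> $ i *\<^sub>R h i) \<in> span (range h)"
      by (intro span_neg span_sum span_scale span_base) auto
    ultimately have "- (\<Sum>i\<in>UNIV. \<alpha> $ i *\<^sub>R h i) + ?S (\<xi> - E a) \<in> g_lam h r lam"
      unfolding g_lam_def by blast
    moreover have "pi_sharp h r lam (\<alpha>, \<xi>) = (a, - (\<Sum>i\<in>UNIV. \<alpha> $ i *\<^sub>R h i) + ?S (\<xi> - E a) + ?S (E a))"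
      by (simp add: pi_sharp_def a_def linear_diff[OF linear_sharp])
    ultimately show ?thesis by force
  qed
  moreover have "(a, y + ?S (E a)) \<in> range (pi_sharp h r lam)" if y: "y \<in> g_lam h r lam" for a y
  proof -
    obtain x \<eta> where y_eq: "y = x + ?S \<eta>" and x: "x \<in> span (range h)" and \<eta>: "\<eta> \<in> annih h"
      using y unfolding g_lam_def by blast
    obtain c where c: "x = (\<Sum>j\<in>UNIV. c j *\<^sub>R h j)"
      using span_range_eq_sum[OF \<open>inj h\<close> x] by blast
    have "(\<chi> j. (\<eta> + E a) \<bullet> h j) = a"
      using \<eta> by (simp add: vec_eq_iff annih_def inner_add_left E)
    then have "pi_sharp h r lam (\<chi> j. - c j, \<eta> + E a) = (a, y + ?S (E a))"
      by (simp add: pi_sharp_def y_eq c linear_add[OF linear_sharp] sum_negf)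
    then show ?thesis by (metis rangeI)
  qed
  ultimately show ?thesis by fastforce
qed

lemma subspace_g_lam: "subspace (g_lam h r lam)"
proof -
  have "subspace (annih h)"
    unfolding annih_def subspace_def by (auto simp: inner_add_left)
  then have "subspace (sharp (r lam) ` annih h)"
    by (rule linear_subspace_image[OF linear_sharp])
  then show ?thesis
    unfolding g_lam_def by (intro subspace_sums subspace_span)
qed

lemma span_subset_g_lam: "span (range h) \<subseteq> g_lam h r lam"
proof
  fix x assume "x \<in> span (range h)"
  moreover have "0 \<in> sharp (r lam) ` annih h"
    by (auto simp: annih_def sharp_def image_iff intro!: exI[of _ 0])
  ultimately show "x \<in> g_lam h r lam"
    unfolding g_lam_def by force
qed

lemma poisson_rank_eq:
  fixes h :: "'l::finite \<Rightarrow> real^'n"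
  assumes "inj h" and "independent (range h)"
  shows "poisson_rank h r lam = CARD('l) + dim (g_lam h r lam)"
proof -
  obtain E where "linear E" and E: "\<And>a j. E a \<bullet> h j = a $ j"
    using dual_lift_exists[OF assms] by blast
  define G where "G = (\<lambda>(a, y). (a, y + sharp (r lam) (E a)))"
  have SE: "linear (\<lambda>a. sharp (r lam) (E a))"
    using linear_compose[OF \<open>linear E\<close> linear_sharp] by (simp add: o_def)
  have "linear G"
    by (simp add: G_def linear_iff case_prod_beta linear_add[OF SE, simplified]
        linear_scale[OF SE, simplified] scaleR_add_right)
  have "inj G" by (auto simp: G_def inj_def)
  have "poisson_rank h r lam = dim (G ` (UNIV \<times> g_lam h r lam))"
    unfolding poisson_rank_def range_pi_sharp[OF assms(1) E] G_def ..
  also have "\<dots> = dim ((UNIV :: (real^'l) set) \<times> g_lam h r lam)"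
    using inj_on_subset[OF \<open>inj G\<close> subset_UNIV] by (rule dim_image_eq[OF \<open>linear G\<close>])
  also have "\<dots> = dim (UNIV :: (real^'l) set) + dim (g_lam h r lam)"
    by (rule dim_Times[OF subspace_UNIV subspace_g_lam])
  also have "\<dots> = CARD('l) + dim (g_lam h r lam)"
    by simp
  finally show ?thesis .
qed

section \<open>Transport in the direction of the dynamical parameter\<close>

text \<open>
  For a covector \<open>e\<close> with \<open>e \<bullet> h j = d $ j\<close>, \<open>transport_gen br h (r \<lambda>) (D \<lambda>) e\<close> is the linear
  vector field on the cotangent fibre whose Lie derivative of \<open>\<pi>\<^sub>\<lambda>\<close> cancels the derivative of
  \<open>\<pi>\<^sub>\<lambda>\<close> in the direction \<open>d\<close> (\<open>transport_gen_compensates_derivative\<close>); its coefficients are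
  the ones for which the dynamical CYBE is exactly this cancellation.
\<close>

definition transport_gen ::
    "(real^'n \<Rightarrow> real^'n \<Rightarrow> real^'n) \<Rightarrow> ('l::finite \<Rightarrow> real^'n) \<Rightarrow> real^'n^'n
      \<Rightarrow> ('l \<Rightarrow> real^'n^'n) \<Rightarrow> real^'n \<Rightarrow> (real^'l) \<times> (real^'n) \<Rightarrow> (real^'l) \<times> (real^'n)" where
  "transport_gen br h R D e x =
     ((\<chi> i. biv (D i) e (snd x)),
      - adT br (sharp R e) (snd x) + (1/2) *\<^sub>R adT br (sharp R (snd x)) e
      - (1/2) *\<^sub>R (\<Sum>i\<in>UNIV. fst x $ i *\<^sub>R adT br (h i) e))"

lemma inner_transport_gen_h:
  assumes bil: "bilinear br" and skew: "\<forall>x y. br x y = - br y x" and w2: "wedge2 R"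
    and adc: "ad_commutes br (h i) R" and abelian: "\<forall>i j. br (h i) (h j) = 0"
  shows "snd (transport_gen br h R D e x) \<bullet> h i = (1/2) * (adT br (h i) e \<bullet> sharp R (snd x))"
proof -
  note adT = inner_adT[OF bil]
  have ad_sharp_e: "adT br (sharp R e) (snd x) \<bullet> h i = - (adT br (h i) e \<bullet> sharp R (snd x))"
  proof -
    have "adT br (sharp R e) (snd x) \<bullet> h i = - (adT br (h i) (snd x) \<bullet> sharp R e)"
      by (simp add: adT skew[rule_format, of "sharp R e"])
    also have "adT br (h i) (snd x) \<bullet> sharp R e = - biv R (adT br (h i) e) (snd x)"
    proof -
      have "biv R (adT br (h i) e) (snd x) + biv R e (adT br (h i) (snd x)) = 0"
        using adc unfolding ad_commutes_def by blast
      moreover have "biv R e (adT br (h i) (snd x)) = adT br (h i) (snd x) \<bullet> sharp R e"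
        by (simp add: biv_eq_inner_sharp inner_commute)
      ultimately show ?thesis by linarith
    qed
    also have "\<dots> = biv R (snd x) (adT br (h i) e)"
      using biv_antisym[OF w2, of "adT br (h i) e" "snd x"] by simp
    finally show ?thesis by (simp add: biv_eq_inner_sharp inner_commute)
  qed
  have ad_sharp_x: "adT br (sharp R (snd x)) e \<bullet> h i = - (adT br (h i) e \<bullet> sharp R (snd x))"
    by (simp add: adT skew[rule_format, of "sharp R (snd x)"])
  have ad_h: "adT br (h j) e \<bullet> h i = 0" for j
    using abelian by (simp add: adT)
  show ?thesis
    by (simp add: transport_gen_def inner_diff_left inner_add_left inner_sum_left ad_sharp_e ad_sharp_x ad_h)
qed

lemma inner_transport_gen_poisson_map:
  assumes bil: "bilinear br" and skew: "\<forall>x y. br x y = - br y x" and w2: "wedge2 R"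
    and adc: "\<forall>i. ad_commutes br (h i) R" and abelian: "\<forall>i j. br (h i) (h j) = 0"
  shows "transport_gen br h R D e x \<bullet> poisson_map h R y
     = (\<Sum>i\<in>UNIV. biv (D i) e (snd x) * (snd y \<bullet> h i))
       - adT br (sharp R e) (snd x) \<bullet> sharp R (snd y) + (1/2) * (adT br (sharp R (snd x)) e \<bullet> sharp R (snd y))
       - (1/2) * (\<Sum>i\<in>UNIV. fst x $ i * (adT br (h i) e \<bullet> sharp R (snd y)))
       - (1/2) * (\<Sum>i\<in>UNIV. fst y $ i * (adT br (h i) e \<bullet> sharp R (snd x)))"
proof -
  obtain \<beta> \<eta> where y: "y = (\<beta>, \<eta>)" by fastforce
  define q where "q = snd (transport_gen br h R D e x)"
  have A: "transport_gen br h R D e x = ((\<chi> i. biv (D i) e (snd x)), q)"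
    by (simp add: transport_gen_def q_def)
  have qh: "q \<bullet> h i = (1/2) * (adT br (h i) e \<bullet> sharp R (snd x))" for i
    unfolding q_def using adc by (intro inner_transport_gen_h[OF bil skew w2 _ abelian]) blast
  have qS: "q \<bullet> sharp R \<eta> = - (adT br (sharp R e) (snd x) \<bullet> sharp R \<eta>)
      + (1/2) * (adT br (sharp R (snd x)) e \<bullet> sharp R \<eta>)
      - (1/2) * (\<Sum>i\<in>UNIV. fst x $ i * (adT br (h i) e \<bullet> sharp R \<eta>))"
    unfolding q_def by (simp add: transport_gen_def inner_diff_left inner_add_left inner_sum_left)
  show ?thesis
    unfolding A y inner_poisson_map
    by (simp add: qh qS sum_distrib_left mult.assoc mult.left_commute)
qed

lemma transport_gen_poisson_map_sum:
  assumes bil: "bilinear br" and skew: "\<forall>x y. br x y = - br y x" and w2: "wedge2 R"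
    and adc: "\<forall>i. ad_commutes br (h i) R" and abelian: "\<forall>i j. br (h i) (h j) = 0"
  shows "transport_gen br h R D e x \<bullet> poisson_map h R y + x \<bullet> poisson_map h R (transport_gen br h R D e y)
     = (\<Sum>i\<in>UNIV. biv (D i) e (snd x) * (snd y \<bullet> h i)) - (\<Sum>i\<in>UNIV. biv (D i) e (snd y) * (snd x \<bullet> h i))
       - half_schouten br R e (snd y) (snd x)"
proof -
  let ?S = "sharp R"
  note adT = inner_adT[OF bil]
  have "x \<bullet> poisson_map h R (transport_gen br h R D e y) = - (transport_gen br h R D e y \<bullet> poisson_map h R x)"
    by (rule poisson_map_antisym[OF w2])
  moreover have "half_schouten br R e (snd y) (snd x)
      = adT br (?S (snd y)) e \<bullet> ?S (snd x) - adT br (?S e) (snd y) \<bullet> ?S (snd x)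
        + adT br (?S e) (snd x) \<bullet> ?S (snd y)"
    unfolding half_schouten_def
    by (simp add: adT skew[rule_format, of "?S (snd x)" "?S e"] inner_minus_right)
  moreover have "adT br (?S (snd y)) e \<bullet> ?S (snd x) = - (adT br (?S (snd x)) e \<bullet> ?S (snd y))"
    by (simp add: adT skew[rule_format, of "?S (snd x)" "?S (snd y)"] inner_minus_right)
  ultimately show ?thesis
    using inner_transport_gen_poisson_map[OF assms, of D e x y]
      inner_transport_gen_poisson_map[OF assms, of D e y x]
    by linarith
qed

lemma transport_gen_compensates_derivative:
  assumes bil: "bilinear br" and skew: "\<forall>x y. br x y = - br y x" and w2: "wedge2 R"
    and adc: "\<forall>i. ad_commutes br (h i) R" and abelian: "\<forall>i j. br (h i) (h j) = 0"
    and cybe: "\<forall>\<xi> \<eta> \<zeta>. (\<Sum>i\<in>UNIV. wedge_vec_biv (h i) (D i) \<xi> \<eta> \<zeta>) + half_schouten br R \<xi> \<eta> \<zeta> = 0"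
  shows "(\<Sum>i\<in>UNIV. (e \<bullet> h i) * biv (D i) (snd y) (snd x))
     = transport_gen br h R D e x \<bullet> poisson_map h R y + x \<bullet> poisson_map h R (transport_gen br h R D e y)"
proof -
  have "(\<Sum>i\<in>UNIV. wedge_vec_biv (h i) (D i) e (snd y) (snd x))
      = (\<Sum>i\<in>UNIV. (e \<bullet> h i) * biv (D i) (snd y) (snd x))
        - (\<Sum>i\<in>UNIV. biv (D i) e (snd x) * (snd y \<bullet> h i)) + (\<Sum>i\<in>UNIV. biv (D i) e (snd y) * (snd x \<bullet> h i))"
    unfolding wedge_vec_biv_def
    by (simp add: sum.distrib sum_subtractf inner_commute mult.commute)
  moreover have "(\<Sum>i\<in>UNIV. wedge_vec_biv (h i) (D i) e (snd y) (snd x))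
      + half_schouten br R e (snd y) (snd x) = 0"
    using cybe by blast
  ultimately show ?thesis
    unfolding transport_gen_poisson_map_sum[OF assms(1-5)] by linarith
qed

lemma bilinear_transport_gen:
  assumes "bilinear br"
  shows "bilinear (transport_gen br h R D)"
proof -
  note ad = bilinear_adT[OF assms]
  note simps = bilinear_ladd[OF ad] bilinear_radd[OF ad] bilinear_lmul[OF ad] bilinear_rmul[OF ad]
    linear_add[OF linear_sharp] linear_scale[OF linear_sharp] biv_eq_inner_sharp
    vec_eq_iff scaleR_add_left sum.distrib scaleR_sum_right algebra_simps
  have "linear (transport_gen br h R D e)" for e
    unfolding linear_iff transport_gen_def by (simp add: simps inner_add_right)
  moreover have "linear (\<lambda>e. transport_gen br h R D e x)" for x
    unfolding linear_iff transport_gen_def by (simp add: simps inner_add_left)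
  ultimately show ?thesis by (simp add: bilinear_def)
qed

lemma continuous_on_transport_gen:
  assumes "bilinear br" and "continuous_on S R" and "\<And>i. continuous_on S (\<lambda>p. D p i)"
    and "continuous_on S X"
  shows "continuous_on S (\<lambda>p. transport_gen br h (R p) (D p) e (X p))"
proof -
  have ad: "bounded_bilinear (adT br)"
    using bilinear_adT[OF assms(1)] by (simp add: bilinear_conv_bounded_bilinear)
  have sh: "bounded_bilinear sharp"
    using bilinear_sharp by (simp add: bilinear_conv_bounded_bilinear)
  show ?thesis
    unfolding transport_gen_def biv_eq_inner_sharp
    by (intro continuous_intros assms bounded_bilinear.continuous_on[OF ad]
        bounded_bilinear.continuous_on[OF sh])
qed

lemma poisson_map_has_vector_derivative:
  assumes "(R has_vector_derivative R') (at s within S)"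
    and "(q has_vector_derivative q') (at s within S)"
  shows "((\<lambda>s. poisson_map h (R s) (q s)) has_vector_derivative
           poisson_map h (R s) q' + (0, sharp R' (snd (q s)))) (at s within S)"
proof -
  have split: "poisson_map h R y = poisson_map h 0 y + (0, sharp R (snd y))" for R y
    by (simp add: poisson_map_def sharp_def)
  have lin: "bounded_linear (poisson_map h 0)"
    using linear_poisson_map by (simp add: linear_conv_bounded_linear)
  have sh: "bounded_bilinear sharp"
    using bilinear_sharp by (simp add: bilinear_conv_bounded_bilinear)
  have "((\<lambda>s. snd (q s)) has_vector_derivative snd q') (at s within S)"
    by (rule bounded_linear.has_vector_derivative[OF bounded_linear_snd assms(2)])
  then have "((\<lambda>s. sharp (R s) (snd (q s))) has_vector_derivative
      sharp (R s) (snd q') + sharp R' (snd (q s))) (at s within S)"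
    by (rule bounded_bilinear.has_vector_derivative[OF sh assms(1)])
  then have "((\<lambda>s. poisson_map h 0 (q s) + (0, sharp (R s) (snd (q s)))) has_vector_derivative
      poisson_map h 0 q' + (0, sharp (R s) (snd q') + sharp R' (snd (q s)))) (at s within S)"
    by (intro has_vector_derivative_add has_vector_derivative_Pair has_vector_derivative_const
        bounded_linear.has_vector_derivative[OF lin assms(2)])
  moreover have "(\<lambda>s. poisson_map h (R s) (q s)) = (\<lambda>s. poisson_map h 0 (q s) + (0, sharp (R s) (snd (q s))))"
    by (rule ext) (rule split)
  ultimately show ?thesis
    by (simp add: split[of "R s" q'] add.assoc)
qed

section \<open>Constancy of the rank\<close>

locale triangular_setting =
  fixes br :: "real^'n \<Rightarrow> real^'n \<Rightarrow> real^'n"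
    and h :: "'l::finite \<Rightarrow> real^'n"
    and r :: "real^'l \<Rightarrow> real^'n^'n"
  assumes lie_algebra: "lie_algebra br"
    and inj_h: "inj h" and independent_h: "independent (range h)"
    and abelian: "\<forall>i j. br (h i) (h j) = 0"
    and dynamical_r_matrix: "triangular_dynamical_r_matrix br h r"
begin

definition dr :: "real^'l \<Rightarrow> 'l \<Rightarrow> real^'n^'n" where
  "dr lam i = frechet_derivative r (at lam) (axis i 1)"

lemma bilinear_br: "bilinear br" and skew_br: "\<forall>x y. br x y = - br y x"
  using lie_algebra unfolding lie_algebra_def by blast+

lemma wedge2_r: "wedge2 (r lam)"
  and ad_commutes_r: "\<forall>i. ad_commutes br (h i) (r lam)"
  and cybe_r: "\<forall>\<xi> \<eta> \<zeta>. (\<Sum>i\<in>UNIV. wedge_vec_biv (h i) (dr lam i) \<xi> \<eta> \<zeta>)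
                      + half_schouten br (r lam) \<xi> \<eta> \<zeta> = 0"
  using dynamical_r_matrix unfolding triangular_dynamical_r_matrix_def dr_def by blast+

lemma r_differentiable: "r differentiable (at lam)"
  and continuous_on_r: "continuous_on UNIV r"
  and continuous_on_dr: "continuous_on UNIV (\<lambda>lam. dr lam i)"
proof -
  have "smooth_map r"
    using dynamical_r_matrix by (simp add: triangular_dynamical_r_matrix_def)
  then have "C_k (Suc (Suc 0)) r"
    unfolding smooth_map_def by blast
  then show "r differentiable (at lam)" "continuous_on UNIV r"
    and "continuous_on UNIV (\<lambda>lam. dr lam i)"
    by (simp_all add: dr_def)
qed

lemma r_has_derivative: "(r has_derivative (\<lambda>u. \<Sum>i\<in>UNIV. u $ i *\<^sub>R dr lam i)) (at lam)"
proof -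
  have lin: "linear (frechet_derivative r (at lam))"
    using r_differentiable by (rule linear_frechet_derivative)
  have "frechet_derivative r (at lam) u = (\<Sum>i\<in>UNIV. u $ i *\<^sub>R dr lam i)" for u
  proof -
    have "u = (\<Sum>i\<in>UNIV. u $ i *\<^sub>R axis i 1)"
      using basis_expansion[of u] by (simp add: scalar_mult_eq_scaleR)
    then have "frechet_derivative r (at lam) u
        = (\<Sum>i\<in>UNIV. frechet_derivative r (at lam) (u $ i *\<^sub>R axis i 1))"
      by (metis linear_sum[OF lin])
    then show ?thesis by (simp add: linear_scale[OF lin] dr_def)
  qed
  then have "frechet_derivative r (at lam) = (\<lambda>u. \<Sum>i\<in>UNIV. u $ i *\<^sub>R dr lam i)"
    by (rule ext)
  then show ?thesis
    using r_differentiable[of lam] unfolding frechet_derivative_works by simp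
qed

lemma r_along_line_has_vector_derivative:
  "((\<lambda>s. r (a + s *\<^sub>R d)) has_vector_derivative (\<Sum>i\<in>UNIV. d $ i *\<^sub>R dr (a + s *\<^sub>R d) i)) (at s within S)"
proof -
  have "((\<lambda>s. a + s *\<^sub>R d) has_derivative (\<lambda>t. t *\<^sub>R d)) (at s within S)"
    by (auto intro!: derivative_eq_intros)
  from has_derivative_compose[OF this r_has_derivative]
  show ?thesis
    by (simp add: has_vector_derivative_def scaleR_sum_right algebra_simps)
qed

lemma poisson_form_along_transport_has_derivative_0:
  assumes e: "\<And>j. e \<bullet> h j = d $ j"
    and flow: "\<And>v. v \<in> {p, q} \<Longrightarrow> (v has_vector_derivative
               - transport_gen br h (r (a + s *\<^sub>R d)) (dr (a + s *\<^sub>R d)) e (v s)) (at s within S)"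
  shows "((\<lambda>s. p s \<bullet> poisson_map h (r (a + s *\<^sub>R d)) (q s)) has_vector_derivative 0) (at s within S)"
proof -
  define R where "R = r (a + s *\<^sub>R d)"
  define A where "A = transport_gen br h R (dr (a + s *\<^sub>R d)) e"
  define R' where "R' = (\<Sum>i\<in>UNIV. d $ i *\<^sub>R dr (a + s *\<^sub>R d) i)"
  have "((\<lambda>s. poisson_map h (r (a + s *\<^sub>R d)) (q s)) has_vector_derivative
      poisson_map h R (- A (q s)) + (0, sharp R' (snd (q s)))) (at s within S)"
    using r_along_line_has_vector_derivative flow[of q]
    unfolding R_def R'_def A_def by (intro poisson_map_has_vector_derivative) auto
  from bounded_bilinear.has_vector_derivative[OF bounded_bilinear_inner flow[of p] this]
  have "((\<lambda>s. p s \<bullet> poisson_map h (r (a + s *\<^sub>R d)) (q s)) has_vector_derivative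
      - (p s \<bullet> poisson_map h R (A (q s))) + snd (p s) \<bullet> sharp R' (snd (q s))
      - A (p s) \<bullet> poisson_map h R (q s)) (at s within S)"
    by (simp add: R_def A_def inner_add_right inner_diff_right inner_Pair_0
        linear_neg[OF linear_poisson_map])
  moreover have "snd (p s) \<bullet> sharp R' (snd (q s))
      = A (p s) \<bullet> poisson_map h R (q s) + p s \<bullet> poisson_map h R (A (q s))"
    unfolding R'_def inner_sharp_sum e[symmetric] A_def R_def
    by (rule transport_gen_compensates_derivative[OF bilinear_br skew_br wedge2_r ad_commutes_r
          abelian cybe_r])
  ultimately show ?thesis by simp
qed

definition transport_flow :: "real^'l \<Rightarrow> real^'l \<Rightarrow> real^'n \<Rightarrow> (real \<Rightarrow> (real^'l) \<times> (real^'n)) \<Rightarrow> bool"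
  where "transport_flow a d e v \<longleftrightarrow> (\<forall>s\<in>{0..1}. (v has_vector_derivative
           - transport_gen br h (r (a + s *\<^sub>R d)) (dr (a + s *\<^sub>R d)) e (v s)) (at s within {0..1}))"

lemma poisson_form_transported:
  assumes e: "\<And>j. e \<bullet> h j = d $ j"
    and V0: "\<And>x. V x 0 = x" and V: "\<And>x. transport_flow a d e (V x)"
  shows "x \<bullet> poisson_map h (r a) y = V x 1 \<bullet> poisson_map h (r (a + d)) (V y 1)"
proof -
  let ?Q = "\<lambda>s. V x s \<bullet> poisson_map h (r (a + s *\<^sub>R d)) (V y s)"
  have "(?Q has_vector_derivative 0) (at s within {0..1})" if "s \<in> {0..1}" for s
    using V[of x] V[of y] that
    by (intro poisson_form_along_transport_has_derivative_0[OF e]) (auto simp: transport_flow_def)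
  then have "(?Q has_derivative (\<lambda>_. 0)) (at s within {0..1})" if "s \<in> {0..1}" for s
    using that by (simp add: has_vector_derivative_def)
  then obtain c where "\<forall>s\<in>{0..1}. ?Q s = c"
    using has_derivative_zero_constant[of "{0..1::real}" ?Q] by auto
  then have "?Q 0 = ?Q 1"
    by (metis atLeastAtMost_iff order_refl zero_le_one)
  then show ?thesis by (simp add: V0)
qed

lemma poisson_rank_le_of_transport:
  assumes e: "\<And>j. e \<bullet> h j = d $ j"
    and flow: "\<And>x. \<exists>v. v 0 = x \<and> transport_flow a d e v"
  shows "poisson_rank h r a \<le> poisson_rank h r (a + d)"
proof -
  from flow obtain V where V: "\<And>x. V x 0 = x" "\<And>x. transport_flow a d e (V x)"
    by metis
  show ?thesis
    unfolding poisson_rank_def pi_sharp_eq_poisson_map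
    by (rule dim_range_le_of_pullback[where T = "\<lambda>x. V x 1"])
      (rule poisson_form_transported[OF e V])
qed

lemma transport_flow_exists:
  assumes bound: "\<And>lam e x. lam \<in> C \<Longrightarrow>
        norm (transport_gen br h (r lam) (dr lam) e x) \<le> B * norm e * norm x"
    and B: "0 \<le> B" and small: "B * norm e < 1"
    and segment: "\<And>s. s \<in> {0..1} \<Longrightarrow> a + s *\<^sub>R d \<in> C"
  shows "\<exists>v. v 0 = x \<and> transport_flow a d e v"
  unfolding transport_flow_def
proof (rule ode_solution_exists)
  show "continuous_on ({0..1} \<times> UNIV)
      (\<lambda>(s, x). - transport_gen br h (r (a + s *\<^sub>R d)) (dr (a + s *\<^sub>R d)) e x)"
    unfolding case_prod_beta
    by (intro continuous_intros continuous_on_transport_gen[OF bilinear_br]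
        continuous_on_compose2[OF continuous_on_r] continuous_on_compose2[OF continuous_on_dr]) auto
  fix s :: real and y z assume "s \<in> {0..1}"
  then have "norm (transport_gen br h (r (a + s *\<^sub>R d)) (dr (a + s *\<^sub>R d)) e (y - z))
      \<le> B * norm e * norm (y - z)"
    using bound segment by blast
  then show "norm (- transport_gen br h (r (a + s *\<^sub>R d)) (dr (a + s *\<^sub>R d)) e y
      - - transport_gen br h (r (a + s *\<^sub>R d)) (dr (a + s *\<^sub>R d)) e z) \<le> B * norm e * norm (y - z)"
    by (simp add: bilinear_rsub[OF bilinear_transport_gen[OF bilinear_br]] norm_minus_commute)
qed (use B small in auto)

lemma poisson_rank_le_nearby:
  "\<exists>\<delta>>0. \<forall>a\<in>ball lam0 1. \<forall>b\<in>ball lam0 1. dist a b < \<delta> \<longrightarrow> poisson_rank h r a \<le> poisson_rank h r b"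
proof -
  obtain E where "linear E" and Eh: "\<And>d j. E d \<bullet> h j = d $ j"
    using dual_lift_exists[OF inj_h independent_h] by blast
  obtain CE where CE: "CE > 0" "\<And>d. norm (E d) \<le> CE * norm d"
    by (rule linear_bounded_pos[OF \<open>linear E\<close>]) blast
  have "continuous_on (cball lam0 1) (\<lambda>lam. transport_gen br h (r lam) (dr lam) e x)" for e x
    by (rule continuous_on_subset[OF continuous_on_transport_gen[OF bilinear_br continuous_on_r
          continuous_on_dr continuous_on_const]]) simp
  then obtain B where B: "B > 0" and bound: "\<forall>lam\<in>cball lam0 1. \<forall>e x.
      norm (transport_gen br h (r lam) (dr lam) e x) \<le> B * norm e * norm x"
    using bilinear_family_uniform_bound[where \<phi> = "\<lambda>lam. transport_gen br h (r lam) (dr lam)",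
        OF compact_cball bilinear_transport_gen[OF bilinear_br]]
    by blast
  define \<delta> where "\<delta> = 1 / (B * CE)"
  have "poisson_rank h r a \<le> poisson_rank h r b"
    if a: "a \<in> ball lam0 1" and b: "b \<in> ball lam0 1" and ab: "dist a b < \<delta>" for a b
  proof -
    have "B * norm (E (b - a)) \<le> B * (CE * norm (b - a))"
      using B CE by (intro mult_left_mono) auto
    also have "\<dots> < B * (CE * \<delta>)"
      using ab B CE by (simp add: dist_norm norm_minus_commute)
    finally have small: "B * norm (E (b - a)) < 1"
      using B CE by (simp add: \<delta>_def)
    have "a + s *\<^sub>R (b - a) \<in> cball lam0 1" if "s \<in> {0..1}" for s
    proof -
      have "(1 - s) *\<^sub>R a + s *\<^sub>R b \<in> ball lam0 1"
        using that a b by (intro convexD[OF convex_ball]) auto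
      then show ?thesis by (simp add: algebra_simps)
    qed
    then have "poisson_rank h r a \<le> poisson_rank h r (a + (b - a))"
      using bound B small Eh
      by (intro poisson_rank_le_of_transport transport_flow_exists[where C = "cball lam0 1"]) auto
    then show ?thesis by simp
  qed
  moreover have "\<delta> > 0" using B CE by (simp add: \<delta>_def)
  ultimately show ?thesis by blast
qed

lemma poisson_rank_locally_constant:
  "\<exists>\<delta>>0. \<forall>lam. dist lam lam0 < \<delta> \<longrightarrow> poisson_rank h r lam0 = poisson_rank h r lam"
proof -
  obtain \<delta> where "\<delta> > 0" and le: "\<forall>a\<in>ball lam0 1. \<forall>b\<in>ball lam0 1.
      dist a b < \<delta> \<longrightarrow> poisson_rank h r a \<le> poisson_rank h r b"
    using poisson_rank_le_nearby by blast
  have "poisson_rank h r lam0 = poisson_rank h r lam" if "dist lam lam0 < min \<delta> 1" for lam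
    using le[rule_format, of lam0 lam] le[rule_format, of lam lam0] that
    by (simp add: dist_commute)
  then show ?thesis using \<open>\<delta> > 0\<close> by (intro exI[of _ "min \<delta> 1"]) auto
qed

lemma poisson_rank_constant: "poisson_rank h r lam = poisson_rank h r lam'"
proof (rule connected_local_const[where A = UNIV and f = "poisson_rank h r"])
  show "\<forall>a\<in>UNIV. \<forall>\<^sub>F b in at a within UNIV. poisson_rank h r a = poisson_rank h r b"
  proof
    fix a :: "real^'l"
    obtain \<delta> where "\<delta> > 0" "\<forall>b. dist b a < \<delta> \<longrightarrow> poisson_rank h r a = poisson_rank h r b"
      using poisson_rank_locally_constant by blast
    then show "\<forall>\<^sub>F b in at a within UNIV. poisson_rank h r a = poisson_rank h r b"
      unfolding eventually_at by blast
  qed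
qed auto

end

theorem corollary2p4:
  fixes br :: "real^'n \<Rightarrow> real^'n \<Rightarrow> real^'n"
    and h :: "'l::finite \<Rightarrow> real^'n"
    and r :: "real^'l \<Rightarrow> real^'n^'n"
  assumes "lie_algebra br"
    and "inj h" and "independent (range h)"
    and "\<forall>i j. br (h i) (h j) = 0"
    and "triangular_dynamical_r_matrix br h r"
  shows "\<exists>k::nat. even k
           \<and> (\<forall>lam. dim (g_lam h r lam) - dim (span (range h)) = k)
           \<and> (\<forall>lam. poisson_rank h r lam = 2 * CARD('l) + k)"
proof -
  interpret triangular_setting br h r
    using assms by unfold_locales
  have dim_h: "dim (span (range h)) = CARD('l)"
    using assms(2,3) by (simp add: dim_eq_card_independent card_image)
  have rank: "poisson_rank h r lam = CARD('l) + dim (g_lam h r lam)" for lam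
    by (rule poisson_rank_eq[OF assms(2,3)])
  define k where "k = dim (g_lam h r 0) - CARD('l)"
  have dim_g: "dim (g_lam h r lam) = CARD('l) + k" for lam
  proof -
    have "CARD('l) \<le> dim (g_lam h r 0)"
      using dim_subset[OF span_subset_g_lam] dim_h by metis
    then show ?thesis
      using rank[of lam] rank[of 0] poisson_rank_constant[of lam 0] by (simp add: k_def)
  qed
  have "even (poisson_rank h r 0)"
    unfolding poisson_rank_def pi_sharp_eq_poisson_map
    using linear_poisson_map poisson_map_antisym[OF wedge2_r] by (rule even_dim_range_skew)
  then show ?thesis
    using rank dim_g dim_h by (intro exI[of _ k]) auto
qed

end
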